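(* Let $p,q\in\mathcal{P}_d(\mathbb{C})$, let $\alpha$ be a root of $p$ of multiplicity $m^p_\alpha$ and $\beta$ a root of $q$ of multiplicity $m^q_\beta$. If $m:=m^p_\alpha+m^q_\beta-d\ge 0$, then $\alpha+\beta$ is a root of $p\boxplus_d q$ of multiplicity exactly $m$ (in particular, if $m=0$ then $\alpha+\beta$ is not a root of $p\boxplus_d q$).
   Context: $\mathcal{P}_d(\mathbb{C})$ denotes the monic complex polynomials of degree $d$. For $p(x)=\prod_{i=1}^d(x-\lambda_i)$ write $p(x)=\sum_{k=0}^d(-1)^k\binom{d}{k}\tilde e_k(p)x^{d-k}$, where $\tilde e_k(p)=\binom{d}{k}^{-1}\sum_{i_1<\dots<i_k}\lambda_{i_1}\cdots\lambda_{i_k}$, $\tilde e_0=1$. The finite free additive convolution $p\boxplus_d q$ is the monic degree-$d$ polynomial with $\tilde e_k(p\boxplus_d q)=\sum_{i=0}^k\binom{k}{i}\tilde e_i(p)\tilde e_{k-i}(q)$ for $0\le k\le d$. *)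

theory Defs
  imports "HOL-Computational_Algebra.Polynomial"
begin

definition monic_deg :: "nat \<Rightarrow> complex poly \<Rightarrow> bool" where
  "monic_deg d p \<longleftrightarrow> degree p = d \<and> lead_coeff p = 1"

text \<open>Normalized coefficients: p(x) = sum_k (-1)^k (d choose k) etilde_k(p) x^(d-k).\<close>
definition etilde :: "nat \<Rightarrow> nat \<Rightarrow> complex poly \<Rightarrow> complex" where
  "etilde d k p = (-1) ^ k * coeff p (d - k) / of_nat (d choose k)"

definition ffconv :: "nat \<Rightarrow> complex poly \<Rightarrow> complex poly \<Rightarrow> complex poly" where
  "ffconv d p q = (\<Sum>k=0..d. monom ((-1) ^ k * of_nat (d choose k) *
      (\<Sum>i=0..k. of_nat (k choose i) * etilde d i p * etilde d (k - i) q)) (d - k))"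

end

theory Submission
  imports Defs
begin

(* By the derivative formula of Marcus, Spielman and Srivastava,
   p [+]_d q = (1/d!) sum_i q^(d-i)(0) p^(i), which commutes with translating p and,
   by symmetry, with translating q. Hence
     (p [+]_d q)^(j)(alpha + beta) = (1/d!) sum_i q^(d-i)(beta) p^(j+i)(alpha).
   If a, b are the multiplicities of alpha in p and of beta in q, the i-th term vanishes
   unless d - i >= b and j + i >= a. So every term vanishes for j < a + b - d, and for
   j = a + b - d only i = d - b survives, with value q^(b)(beta) p^(a)(alpha) /= 0. *)

lemma order_eq_iff_higher_pderiv:
  fixes f :: "'a::{idom,semiring_char_0} poly"
  assumes "f \<noteq> 0"
  shows "order c f = n \<longleftrightarrow>
    (\<forall>j<n. poly ((pderiv ^^ j) f) c = 0) \<and> poly ((pderiv ^^ n) f) c \<noteq> 0"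
  using assms
proof (induction n arbitrary: f)
  case 0
  then show ?case by (simp add: order_eq_0_iff)
next
  case (Suc n)
  have shift: "(pderiv ^^ Suc j) f = (pderiv ^^ j) (pderiv f)" for j
    by (simp only: funpow_Suc_right o_apply)
  have "((\<forall>j<Suc n. poly ((pderiv ^^ j) f) c = 0) \<and> poly ((pderiv ^^ Suc n) f) c \<noteq> 0) \<longleftrightarrow>
      poly f c = 0 \<and> (\<forall>j<n. poly ((pderiv ^^ j) (pderiv f)) c = 0)
        \<and> poly ((pderiv ^^ n) (pderiv f)) c \<noteq> 0"
    by (simp only: All_less_Suc2 shift funpow_0 conj_assoc)
  also have "\<dots> \<longleftrightarrow> poly f c = 0 \<and> pderiv f \<noteq> 0 \<and> order c (pderiv f) = n"
    using Suc.IH[of "pderiv f"] by (cases "pderiv f = 0") auto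
  also have "\<dots> \<longleftrightarrow> order c f = Suc n"
  proof (cases "poly f c = 0 \<and> pderiv f \<noteq> 0")
    case True
    then show ?thesis using order_pderiv[OF Suc.prems] by auto
  next
    case False
    then have "order c f = 0"
      using Suc.prems by (auto simp: order_eq_0_iff dest: pderiv_iszero)
    then show ?thesis using False by simp
  qed
  finally show ?case ..
qed

lemma coeff_ffconv:
  "coeff (ffconv d p q) n = (if n \<le> d then (-1) ^ (d - n) * of_nat (d choose (d - n)) *
     (\<Sum>i=0..d-n. of_nat ((d - n) choose i) * etilde d i p * etilde d (d - n - i) q) else 0)"
proof -
  have "coeff (ffconv d p q) n = (\<Sum>k=0..d. if k = d - n \<and> n \<le> d then (-1) ^ k * of_nat (d choose k) *
      (\<Sum>i=0..k. of_nat (k choose i) * etilde d i p * etilde d (k - i) q) else 0)"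
    unfolding ffconv_def coeff_sum coeff_monom by (intro sum.cong) auto
  then show ?thesis by (cases "n \<le> d") auto
qed

lemma signed_binomial_etilde_product:
  assumes "i \<le> k" "k \<le> d"
  shows "(-1) ^ k * of_nat (d choose k) * (of_nat (k choose i) * etilde d i p * etilde d (k - i) q)
     = fact (d - i) * fact (d - k + i) / (fact (d - k) * fact d) * coeff p (d - i) * coeff q (d - k + i)"
proof -
  have sign: "(-1::complex) ^ k * ((-1) ^ i * (-1) ^ (k - i)) = 1"
    using assms by (simp add: power_add[symmetric] power_even_eq[symmetric] mult_2[symmetric])
  have idx: "d - (k - i) = d - k + i" using assms by simp
  show ?thesis
    unfolding etilde_def idx using assms sign
    by (simp add: binomial_fact idx[symmetric] field_simps)
qed

lemma pochhammer_of_nat_Suc: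
  "pochhammer (of_nat (Suc n) :: 'a::field_char_0) i = fact (n + i) / fact n"
proof -
  have "(fact (n + i) :: 'a) = pochhammer 1 n * pochhammer (1 + of_nat n) i"
    by (simp add: pochhammer_fact pochhammer_product')
  also have "\<dots> = fact n * pochhammer (of_nat (Suc n)) i"
    by (simp add: pochhammer_fact)
  finally show ?thesis by (simp add: field_simps)
qed

lemma coeff_sum_higher_pderiv:
  "coeff (\<Sum>i=0..d. smult (poly ((pderiv ^^ (d - i)) q) 0) ((pderiv ^^ i) p)) n =
   (\<Sum>i=0..d. fact (d - i) * coeff q (d - i) * (fact (n + i) / fact n) * coeff p (n + i))"
  for p q :: "'a::field_char_0 poly"
  unfolding coeff_sum coeff_smult poly_0_coeff_0 coeff_higher_pderiv pochhammer_of_nat_Suc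
  by (simp add: pochhammer_fact[symmetric] mult_ac)

lemma ffconv_eq_sum_higher_pderiv:
  assumes "degree p \<le> d" "degree q \<le> d"
  shows "ffconv d p q =
    smult (1 / fact d) (\<Sum>i=0..d. smult (poly ((pderiv ^^ (d - i)) q) 0) ((pderiv ^^ i) p))"
proof (rule poly_eqI)
  fix n
  let ?c = "\<lambda>i. fact (d - i) * coeff q (d - i) * (fact (n + i) / fact n) * coeff p (n + i)"
  have high: "coeff p (n + i) = 0" if "d < n + i" for i
    using assms that by (intro coeff_eq_0) auto
  show "coeff (ffconv d p q) n =
    coeff (smult (1 / fact d) (\<Sum>i=0..d. smult (poly ((pderiv ^^ (d - i)) q) 0) ((pderiv ^^ i) p))) n"
  proof (cases "n \<le> d")
    case False
    then show ?thesis by (simp add: coeff_ffconv coeff_sum_higher_pderiv high)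
  next
    case True
    define k where "k = d - n"
    have n: "n = d - k" and "k \<le> d" using True by (auto simp: k_def)
    have "coeff (ffconv d p q) n = (\<Sum>i=0..k. fact (d - i) * fact (d - k + i) / (fact (d - k) * fact d)
        * coeff p (d - i) * coeff q (d - k + i))"
      using True \<open>k \<le> d\<close> by (simp add: coeff_ffconv k_def[symmetric] sum_distrib_left
          signed_binomial_etilde_product)
    also have "\<dots> = (\<Sum>i=0..k. ?c i) / fact d"
      by (subst sum.atLeastAtMost_rev)
        (auto simp: n sum_divide_distrib \<open>k \<le> d\<close> intro!: sum.cong)
    also have "(\<Sum>i=0..k. ?c i) = (\<Sum>i=0..d. ?c i)"
      by (rule sum.mono_neutral_left) (auto simp: k_def high)
    finally show ?thesis by (simp add: coeff_sum_higher_pderiv)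
  qed
qed

lemma higher_pderiv_pcompose_shift:
  "(pderiv ^^ j) (pcompose f [:y, 1:]) = pcompose ((pderiv ^^ j) f) [:y, 1:]"
  by (induction j) (simp_all add: pderiv_pcompose pderiv_pCons)

lemma ffconv_commute: "ffconv d p q = ffconv d q p"
proof -
  have "(\<Sum>i=0..k. of_nat (k choose i) * etilde d i p * etilde d (k - i) q)
     = (\<Sum>i=0..k. of_nat (k choose i) * etilde d i q * etilde d (k - i) p)" for k
    by (subst sum.atLeastAtMost_rev)
      (auto intro!: sum.cong simp: binomial_symmetric[symmetric] mult_ac)
  then show ?thesis unfolding ffconv_def by simp
qed

lemma ffconv_pcompose_shift_left:
  assumes "degree p \<le> d" "degree q \<le> d"
  shows "ffconv d (pcompose p [:y, 1:]) q = pcompose (ffconv d p q) [:y, 1:]"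
  using assms
  by (simp add: ffconv_eq_sum_higher_pderiv degree_pcompose pcompose_smult pcompose_sum
      higher_pderiv_pcompose_shift)

lemma ffconv_pcompose_shift_right:
  assumes "degree p \<le> d" "degree q \<le> d"
  shows "ffconv d p (pcompose q [:y, 1:]) = pcompose (ffconv d p q) [:y, 1:]"
  using ffconv_pcompose_shift_left[OF assms(2,1)] by (simp add: ffconv_commute)

lemma poly_higher_pderiv_ffconv:
  assumes "degree p \<le> d" "degree q \<le> d"
  shows "poly ((pderiv ^^ j) (ffconv d p q)) (a + b) =
    (\<Sum>i=0..d. poly ((pderiv ^^ (d - i)) q) b * poly ((pderiv ^^ (j + i)) p) a) / fact d"
proof -
  let ?pa = "pcompose p [:a, 1:]" and ?qb = "pcompose q [:b, 1:]"
  have "poly ((pderiv ^^ j) (ffconv d p q)) (a + b) = poly ((pderiv ^^ j) (ffconv d ?pa ?qb)) 0"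
    using assms by (simp add: ffconv_pcompose_shift_left ffconv_pcompose_shift_right
        degree_pcompose higher_pderiv_pcompose_shift poly_pcompose add.commute)
  also have "\<dots> =
    (\<Sum>i=0..d. poly ((pderiv ^^ (d - i)) q) b * poly ((pderiv ^^ (j + i)) p) a) / fact d"
    using assms
    by (simp add: ffconv_eq_sum_higher_pderiv degree_pcompose higher_pderiv_smult higher_pderiv_sum
        poly_sum higher_pderiv_pcompose_shift poly_pcompose funpow_add sum_divide_distrib mult_ac)
  finally show ?thesis .
qed

lemma poly_higher_pderiv_ffconv_at_sum_of_roots:
  fixes p q :: "complex poly"
  assumes "degree p \<le> d" "degree q \<le> d" "p \<noteq> 0" "q \<noteq> 0"
    and "d \<le> order \<alpha> p + order \<beta> q"
  shows "\<forall>j < order \<alpha> p + order \<beta> q - d. poly ((pderiv ^^ j) (ffconv d p q)) (\<alpha> + \<beta>) = 0"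
    and "poly ((pderiv ^^ (order \<alpha> p + order \<beta> q - d)) (ffconv d p q)) (\<alpha> + \<beta>) \<noteq> 0"
proof -
  define a b where "a = order \<alpha> p" and "b = order \<beta> q"
  have "b \<le> d" using order_degree[OF \<open>q \<noteq> 0\<close>, of \<beta>] assms(2) by (simp add: b_def)
  note p_derivs = order_eq_iff_higher_pderiv[OF \<open>p \<noteq> 0\<close>, THEN iffD1, OF a_def[symmetric]]
  note q_derivs = order_eq_iff_higher_pderiv[OF \<open>q \<noteq> 0\<close>, THEN iffD1, OF b_def[symmetric]]
  let ?t = "\<lambda>j i. poly ((pderiv ^^ (d - i)) q) \<beta> * poly ((pderiv ^^ (j + i)) p) \<alpha>"
  have term_eq_0: "?t j i = 0" if "j \<le> a + b - d" "i \<noteq> d - b \<or> j < a + b - d" "i \<le> d" for i j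
  proof (cases "d - i < b")
    case True
    then show ?thesis using q_derivs by simp
  next
    case False
    then have "j + i < a" using that \<open>b \<le> d\<close> assms(5) unfolding a_def b_def by auto
    then show ?thesis using p_derivs by simp
  qed
  show "\<forall>j < a + b - d. poly ((pderiv ^^ j) (ffconv d p q)) (\<alpha> + \<beta>) = 0"
    using term_eq_0 by (auto simp: poly_higher_pderiv_ffconv assms intro!: sum.neutral)
  have "(\<Sum>i=0..d. ?t (a + b - d) i) = (\<Sum>i\<in>{d - b}. ?t (a + b - d) i)"
    by (rule sum.mono_neutral_right) (use term_eq_0 in auto)
  also have "\<dots> = poly ((pderiv ^^ b) q) \<beta> * poly ((pderiv ^^ a) p) \<alpha>"
    using \<open>b \<le> d\<close> assms(5) by (simp add: a_def b_def)
  finally show "poly ((pderiv ^^ (a + b - d)) (ffconv d p q)) (\<alpha> + \<beta>) \<noteq> 0"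
    using p_derivs q_derivs by (simp add: poly_higher_pderiv_ffconv assms)
qed

theorem mainTheorem2:
  fixes d :: nat and p q :: "complex poly" and \<alpha> \<beta> :: complex
  assumes "monic_deg d p" and "monic_deg d q"
    and "poly p \<alpha> = 0" and "poly q \<beta> = 0"
    and "order \<alpha> p + order \<beta> q \<ge> d"
  shows "order (\<alpha> + \<beta>) (ffconv d p q) = order \<alpha> p + order \<beta> q - d
         \<and> (order \<alpha> p + order \<beta> q = d \<longrightarrow> poly (ffconv d p q) (\<alpha> + \<beta>) \<noteq> 0)"
proof -
  have deg: "degree p \<le> d" "degree q \<le> d" and nonzero: "p \<noteq> 0" "q \<noteq> 0"
    using assms(1,2) by (auto simp: monic_deg_def)
  note vanishing = poly_higher_pderiv_ffconv_at_sum_of_roots[OF deg nonzero assms(5)]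
  have "ffconv d p q \<noteq> 0"
    using vanishing(2) by auto
  then have "order (\<alpha> + \<beta>) (ffconv d p q) = order \<alpha> p + order \<beta> q - d"
    using vanishing by (simp add: order_eq_iff_higher_pderiv)
  moreover have "poly (ffconv d p q) (\<alpha> + \<beta>) \<noteq> 0" if "order \<alpha> p + order \<beta> q = d"
    using vanishing(2) that by simp
  ultimately show ?thesis by blast
qed

end
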